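(* For $n\in\mathbb{Z}^+$ we have $$\begin{aligned}&t(3,4,5;n)=2N(3,4,5;2n+3)&&\text{for } n\equiv 3\pmod 4,\\ &t(3,5,20;n)=2N(3,5,20;2n+7)&&\text{for } n\equiv 1\pmod 4,\\ &t(3,5,36;n)=2N(3,5,36;2n+11)&&\text{for } n\equiv 3\pmod 4,\\ &t(3,5,12;n)=\tfrac 12N(3,5,12;8n+20)&&\text{for } n\equiv 1\pmod 4.\end{aligned}$$
   Context: $\mathbb{Z}^+$ is the set of positive integers. For $a,b,c\in\mathbb{Z}^+$ and nonnegative integer $n$, $N(a,b,c;n)$ denotes the number of triples $(x,y,z)\in\mathbb{Z}^3$ with $n=ax^2+by^2+cz^2$, and $t(a,b,c;n)$ denotes the number of triples $(x,y,z)\in\mathbb{Z}^3$ with $n=a\frac{x(x+1)}2+b\frac{y(y+1)}2+c\frac{z(z+1)}2$. *)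

theory Defs
  imports Complex_Main
begin

definition N :: "nat \<Rightarrow> nat \<Rightarrow> nat \<Rightarrow> nat \<Rightarrow> nat" where
  "N a b c n = card {(x :: int, y :: int, z :: int).
      int n = int a * x^2 + int b * y^2 + int c * z^2}"

definition t :: "nat \<Rightarrow> nat \<Rightarrow> nat \<Rightarrow> nat \<Rightarrow> nat" where
  "t a b c n = card {(x :: int, y :: int, z :: int).
      int n = int a * (x * (x + 1) div 2) + int b * (y * (y + 1) div 2)
            + int c * (z * (z + 1) div 2)}"

end

theory Submission
  imports Defs
begin

(* With X = 2x + 1 etc., t(3,5,c;n) counts the representations of 8n + 8 + c by
   3X^2 + 5Y^2 + cZ^2 with X, Y, Z odd, and 3x^2 + 4y^2 + 5z^2 turns into 3x^2 + 5y^2 + 4z^2 by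
   exchanging y and z. For odd X, Y the residue of 3X^2 + 5Y^2 modulo 32 is then fixed, and
   factoring X^2 - 25Y^2 or Y^2 - 9X^2 shows that changes of sign split the odd representations
   into two or four classes of equal size, cut out by congruences modulo 16 and 32. A linear
   substitution maps one class bijectively onto the representations of a quarter of the number
   (or onto a sign-change half of them), which gives the factor 2. For c = 12 the representations
   of 4m with x even are halved by exchanging x/2 and z, and one half is the image of a class of
   odd representations, so there are as many of them as odd ones. *)

definition reps :: "int \<Rightarrow> int \<Rightarrow> int \<Rightarrow> int \<Rightarrow> (int \<times> int \<times> int) set" where
  "reps a b c m = {(x, y, z). a * x^2 + b * y^2 + c * z^2 = m}"

definition odd_reps :: "int \<Rightarrow> int \<Rightarrow> int \<Rightarrow> int \<Rightarrow> (int \<times> int \<times> int) set" where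
  "odd_reps a b c m = {(x, y, z) \<in> reps a b c m. odd x \<and> odd y \<and> odd z}"

lemma abs_le_mult_square:
  fixes d v :: int
  assumes "d > 0"
  shows "\<bar>v\<bar> \<le> d * v^2"
proof (cases "v = 0")
  case False
  then have "\<bar>v\<bar> * 1 \<le> \<bar>v\<bar> * \<bar>v\<bar>" by (intro mult_left_mono) auto
  also have "\<dots> = 1 * v^2" by (simp add: power2_eq_square abs_mult_self_eq)
  also have "\<dots> \<le> d * v^2" using assms by (intro mult_right_mono) auto
  finally show ?thesis by simp
qed simp

lemma finite_reps:
  assumes "a > 0" "b > 0" "c > 0"
  shows "finite (reps a b c m)"
proof -
  have "\<bar>x\<bar> \<le> \<bar>m\<bar> \<and> \<bar>y\<bar> \<le> \<bar>m\<bar> \<and> \<bar>z\<bar> \<le> \<bar>m\<bar>" if "(x, y, z) \<in> reps a b c m" for x y z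
  proof -
    have "a * x^2 + b * y^2 + c * z^2 = m" using that by (simp add: reps_def)
    moreover have "0 \<le> a * x^2" "0 \<le> b * y^2" "0 \<le> c * z^2" using assms by simp_all
    ultimately show ?thesis
      using abs_le_mult_square[OF assms(1), of x] abs_le_mult_square[OF assms(2), of y]
        abs_le_mult_square[OF assms(3), of z] by linarith
  qed
  then have "reps a b c m \<subseteq> {-\<bar>m\<bar>..\<bar>m\<bar>} \<times> {-\<bar>m\<bar>..\<bar>m\<bar>} \<times> {-\<bar>m\<bar>..\<bar>m\<bar>}"
    by (fastforce simp: abs_le_iff)
  then show ?thesis by (rule finite_subset) simp
qed

lemma finite_odd_reps:
  assumes "a > 0" "b > 0" "c > 0"
  shows "finite (odd_reps a b c m)"
proof (rule finite_subset)
  show "odd_reps a b c m \<subseteq> reps a b c m" by (auto simp: odd_reps_def)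
qed (rule finite_reps[OF assms])

lemma N_eq_card_reps: "N a b c n = card (reps (int a) (int b) (int c) (int n))"
  unfolding N_def reps_def by (simp add: eq_commute)

lemma odd_square_eq_triangular: "(2 * x + 1)^2 = 8 * (x * (x + 1) div 2) + (1::int)"
proof -
  obtain q where "x * (x + 1) = 2 * q" by (metis dvd_def even_mult_iff odd_even_add odd_one even_add)
  then show ?thesis by (simp add: algebra_simps power2_eq_square)
qed

lemma t_eq_card_odd_reps:
  "t a b c n = card (odd_reps (int a) (int b) (int c) (8 * int n + int a + int b + int c))"
proof -
  let ?T = "{(x :: int, y :: int, z :: int).
      int n = int a * (x * (x + 1) div 2) + int b * (y * (y + 1) div 2)
            + int c * (z * (z + 1) div 2)}"
  have scaled: "k * (2 * x + 1)^2 = 8 * (k * (x * (x + 1) div 2)) + k" for k x :: int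
    unfolding odd_square_eq_triangular by (simp add: algebra_simps)
  have "bij_betw (\<lambda>(x, y, z). (2 * x + 1, 2 * y + 1, 2 * z + 1)) ?T
      (odd_reps (int a) (int b) (int c) (8 * int n + int a + int b + int c))"
    by (rule bij_betw_byWitness[where f' = "\<lambda>(x, y, z). (x div 2, y div 2, z div 2)"])
      (auto simp: odd_reps_def reps_def scaled elim!: oddE)
  then show ?thesis unfolding t_def by (rule bij_betw_same_card)
qed

lemma bij_betw_swap_reps: "bij_betw (\<lambda>(x, y, z). (x, z, y)) (reps a b c m) (reps a c b m)"
  by (rule bij_betw_byWitness[where f' = "\<lambda>(x, y, z). (x, z, y)"]) (auto simp: reps_def algebra_simps)

lemma bij_betw_swap_odd_reps: "bij_betw (\<lambda>(x, y, z). (x, z, y)) (odd_reps a b c m) (odd_reps a c b m)"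
  by (rule bij_betw_byWitness[where f' = "\<lambda>(x, y, z). (x, z, y)"]) (auto simp: odd_reps_def reps_def algebra_simps)

lemma card_eq_twice_card_half:
  assumes "finite A" "B \<subseteq> A"
    and "\<And>v. v \<in> A \<Longrightarrow> g v \<in> A \<and> g (g v) = v \<and> (g v \<in> B \<longleftrightarrow> v \<notin> B)"
  shows "card A = 2 * card B"
proof -
  have "bij_betw g B (A - B)"
    by (rule bij_betw_byWitness[where f' = g]) (use assms in auto)
  then have "card (A - B) = card B" by (simp add: bij_betw_same_card)
  moreover have "card (A - B) = card A - card B" "card B \<le> card A"
    using assms(1,2) by (auto simp: card_Diff_subset finite_subset card_mono)
  ultimately show ?thesis by linarith
qed

lemma bij_betw_by_inverse:
  assumes "\<And>a. a \<in> A \<Longrightarrow> f a \<in> B \<and> g (f a) = a"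
    and "\<And>b. b \<in> B \<Longrightarrow> g b \<in> A \<and> f (g b) = b"
  shows "bij_betw f A B"
  by (rule bij_betw_byWitness[where f' = g]) (use assms in blast)+

section \<open>Congruences for representations by 3x^2 + 5y^2 + cz^2\<close>

lemma odd_square_eq: "odd (x::int) \<Longrightarrow> \<exists>j. x^2 = 8 * j + 1"
  by (metis oddE odd_square_eq_triangular)

lemma two_mul_add_one_ne_two_mul: "2 * a + 1 \<noteq> 2 * (b::int)"
  by presburger

lemma dvd_mult_odd_square_sub:
  fixes c z :: int
  assumes "4 dvd c" "odd z"
  shows "32 dvd c * z^2 - c"
proof -
  obtain j where "z^2 = 8 * j + 1" using odd_square_eq[OF assms(2)] by blast
  then have "c * z^2 - c = c * (8 * j)" by (simp add: algebra_simps)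
  moreover have "4 * 8 dvd c * (8 * j)" using assms(1) by (rule mult_dvd_mono) simp
  ultimately show ?thesis by simp
qed

lemma pow2_dvd_factor_of_odd_sum:
  fixes p q :: int
  assumes "odd (p + q)" "2^k dvd p * q"
  shows "2^k dvd p \<or> 2^k dvd q"
proof (cases "odd p")
  case True
  then have "coprime (2^k) p" by simp
  then show ?thesis using assms(2) by (simp add: coprime_dvd_mult_right_iff)
next
  case False
  then have "coprime (2^k) q" using assms(1) by simp
  then show ?thesis using assms(2) by (simp add: coprime_dvd_mult_left_iff)
qed

lemma mod_8_eq_4_of_mult_odd:
  fixes p q :: int
  assumes "odd q" "(p * q) mod 8 = 4"
  shows "p mod 8 = 4"
proof -
  have "coprime 4 q" using coprime_power_left_iff[of 2 2 q] assms(1) by simp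
  moreover have "4 dvd p * q" using assms(2) by presburger
  ultimately have "4 dvd p" by (simp add: coprime_dvd_mult_left_iff)
  then obtain r where p: "p = 4 * r" ..
  define s where "s = r * q"
  have "p * q = 4 * s" by (simp add: p s_def)
  then have "odd s" using assms(2) by presburger
  then have "odd r" by (simp add: s_def)
  then show ?thesis using p by presburger
qed

lemma dvd_16_of_form_3_5_mod_32_eq_16:
  fixes x y :: int
  assumes "odd x" "odd y" "(3 * x^2 + 5 * y^2) mod 32 = 16"
  shows "16 dvd x + 5 * y \<or> 16 dvd x - 5 * y"
proof -
  have "even (x + 5 * y)" "even (x - 5 * y)" using assms(1,2) by simp_all
  then obtain u v where u: "x + 5 * y = 2 * u" and v: "x - 5 * y = 2 * v" by (meson evenE)
  have "4 * (u * v) = (x + 5 * y) * (x - 5 * y)" unfolding u v by simp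
  also have "\<dots> = x^2 - 25 * y^2" by (simp add: algebra_simps power2_eq_square)
  finally have uv: "4 * (u * v) = x^2 - 25 * y^2" .
  obtain k where k: "3 * x^2 + 5 * y^2 = 32 * k + 16" using assms(3) by (metis div_mult_mod_eq mult.commute)
  obtain j where j: "y^2 = 8 * j + 1" using odd_square_eq[OF assms(2)] by blast
  have "3 * (u * v) = 8 * (k - 20 * j - 2)" using uv k j by (simp add: algebra_simps)
  then have "8 dvd 3 * (u * v)" by simp
  then have "8 dvd u * v" by presburger
  moreover have "u + v = x" using u v by linarith
  ultimately have "8 dvd u \<or> 8 dvd v" using pow2_dvd_factor_of_odd_sum[of u v 3] assms(1) by simp
  moreover have "16 dvd 2 * w \<longleftrightarrow> 8 dvd w" for w :: int by presburger
  ultimately show ?thesis unfolding u v by blast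
qed

lemma mod_16_of_form_3_5_mod_32_eq_0:
  fixes x y :: int
  assumes "odd x" "odd y" "(3 * x^2 + 5 * y^2) mod 32 = 0"
  shows "(y - 3 * x) mod 16 = 8 \<and> \<not> 8 dvd y + 3 * x \<or> (y + 3 * x) mod 16 = 8 \<and> \<not> 8 dvd y - 3 * x"
proof -
  have "even (y - 3 * x)" "even (y + 3 * x)" using assms(1,2) by simp_all
  then obtain p q where p: "y - 3 * x = 2 * p" and q: "y + 3 * x = 2 * q" by (meson evenE)
  have "4 * (p * q) = (y - 3 * x) * (y + 3 * x)" unfolding p q by simp
  also have "\<dots> = y^2 - 9 * x^2" by (simp add: algebra_simps power2_eq_square)
  finally have pq: "4 * (p * q) = y^2 - 9 * x^2" .
  obtain k where k: "3 * x^2 + 5 * y^2 = 32 * k" using assms(3) by (metis dvdE mod_eq_0_iff_dvd)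
  obtain j where j: "y^2 = 8 * j + 1" using odd_square_eq[OF assms(2)] by blast
  have "p * q = 8 * (4 * j - 3 * k) + 4" using pq k j by (simp add: algebra_simps)
  then have pq8: "(p * q) mod 8 = 4" by presburger
  have half: "8 dvd 2 * w \<longleftrightarrow> 4 dvd w" "(2 * w) mod 16 = 8 \<longleftrightarrow> w mod 8 = 4" for w :: int
    by presburger+
  have "p + q = y" using p q by linarith
  then consider "odd q" | "odd p" using assms(2) by auto
  then show ?thesis
  proof cases
    case 1
    then have "p mod 8 = 4" using pq8 by (rule mod_8_eq_4_of_mult_odd)
    moreover have "\<not> 4 dvd q" using 1 by auto
    ultimately show ?thesis unfolding p q half by blast
  next
    case 2
    moreover have "(q * p) mod 8 = 4" using pq8 by (simp add: mult.commute)
    ultimately have "q mod 8 = 4" by (rule mod_8_eq_4_of_mult_odd)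
    moreover have "\<not> 4 dvd p" using 2 by auto
    ultimately show ?thesis unfolding p q half by blast
  qed
qed

lemma odd_reps_3_5_mod_32:
  assumes "(x, y, z) \<in> odd_reps 3 5 c M" "4 dvd c"
  shows "(3 * x^2 + 5 * y^2) mod 32 = (M - c) mod 32"
proof -
  have eq: "3 * x^2 + 5 * y^2 - (M - c) = - (c * z^2 - c)" and "odd z"
    using assms(1) by (auto simp: odd_reps_def reps_def)
  then have "32 dvd - (c * z^2 - c)" using dvd_mult_odd_square_sub[OF assms(2)] by (simp only: dvd_minus_iff)
  then show ?thesis unfolding mod_eq_dvd_iff eq .
qed

lemma reps_3_5_parity:
  fixes c m :: int
  assumes "(x, y, z) \<in> reps 3 5 c m" "c mod 8 = 4" "m mod 8 = 1"
  shows "even x \<and> odd y \<and> odd (x div 2 + z)"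
proof -
  obtain k where "c = 8 * k + 4" using assms(2) by (metis div_mult_mod_eq mult.commute)
  moreover obtain n where "m = 8 * n + 1" using assms(3) by (metis div_mult_mod_eq mult.commute)
  ultimately have eq: "3 * x^2 + 5 * y^2 + 8 * (k * z^2) + 4 * z^2 = 8 * n + 1"
    using assms(1) by (simp add: reps_def algebra_simps)
  then have "odd (3 * x^2 + 5 * y^2 + 8 * (k * z^2) + 4 * z^2)" by simp
  then have xy: "odd x \<longleftrightarrow> even y" by simp
  have even_x: "even x"
  proof (rule ccontr)
    assume "odd x"
    then obtain j where "x^2 = 8 * j + 1" using odd_square_eq by blast
    moreover obtain b where "y = 2 * b" using xy \<open>odd x\<close> by blast
    then have "y^2 = 4 * b^2" by simp
    ultimately have "2 * (6 * j + 5 * b^2 + 2 * (k * z^2) + z^2) + 1 = 2 * (2 * n)"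
      using eq by (simp add: algebra_simps)
    then show False using two_mul_add_one_ne_two_mul by blast
  qed
  then obtain u where x: "x = 2 * u" ..
  have "odd y" using xy even_x by simp
  then obtain j where "y^2 = 8 * j + 1" using odd_square_eq by blast
  moreover have "x^2 = 4 * u^2" by (simp add: x)
  ultimately have "3 * u^2 + z^2 + 1 = 2 * (n - 5 * j - k * z^2)" using eq by (simp add: algebra_simps)
  then have "even (3 * u^2 + z^2 + 1)" by simp
  then have "odd (x div 2 + z)" by (simp add: x)
  with even_x \<open>odd y\<close> show ?thesis by blast
qed

lemma reps_3_5_12_odd:
  fixes m :: int
  assumes "(x, y, z) \<in> reps 3 5 12 (4 * m)" "m mod 8 = 7" "odd x"
  shows "odd y \<and> odd z"
proof -
  obtain n where "m = 8 * n + 7" using assms(2) by (metis div_mult_mod_eq mult.commute)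
  with assms(1) have eq: "3 * x^2 + 5 * y^2 + 12 * z^2 = 32 * n + 28" by (simp add: reps_def)
  then have "even (3 * x^2 + 5 * y^2 + 12 * z^2)" by simp
  then have "odd y" using assms(3) by simp
  obtain i j where "x^2 = 8 * i + 1" "y^2 = 8 * j + 1"
    using odd_square_eq assms(3) \<open>odd y\<close> by blast
  with eq have "3 * z^2 = 2 * (4 * n + 2 - 3 * i - 5 * j) + 1" by (simp add: algebra_simps)
  then have "odd (3 * z^2)" by simp
  with \<open>odd y\<close> show ?thesis by simp
qed

lemma form_3_5_3_parity:
  fixes a b z n :: int
  assumes eq: "3 * a^2 + 5 * b^2 + 3 * z^2 = 8 * n + 7"
  shows "(odd z \<longleftrightarrow> even a) \<and> (odd z \<longrightarrow> even b \<and> odd (a div 2 + b div 2))"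
proof -
  have z_a: "odd z \<longleftrightarrow> even a"
  proof
    assume "odd z"
    show "even a"
    proof (rule ccontr)
      assume "odd a"
      obtain i j where "a^2 = 8 * i + 1" "z^2 = 8 * j + 1"
        using odd_square_eq \<open>odd a\<close> \<open>odd z\<close> by blast
      with eq have b: "5 * b^2 = 2 * (4 * n - 12 * i - 12 * j) + 1" by (simp add: algebra_simps)
      then have "odd (5 * b^2)" by simp
      then have "odd b" by simp
      then obtain l where "b^2 = 8 * l + 1" using odd_square_eq by blast
      with b have "2 * (5 * l) + 1 = 2 * (n - 3 * i - 3 * j)" by (simp add: algebra_simps)
      then show False using two_mul_add_one_ne_two_mul by blast
    qed
  next
    assume "even a"
    show "odd z"
    proof (rule ccontr)
      assume "\<not> odd z"
      then obtain r where z: "z = 2 * r" by blast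
      obtain p where a: "a = 2 * p" using \<open>even a\<close> by blast
      have "odd (3 * a^2 + 5 * b^2 + 3 * z^2)" using eq by simp
      then have "odd b" by (simp add: a z)
      then obtain l where "b^2 = 8 * l + 1" using odd_square_eq by blast
      with eq have "2 * (2 * n) + 1 = 2 * (3 * p^2 + 3 * r^2 + 10 * l)"
        by (simp add: a z algebra_simps)
      then show False using two_mul_add_one_ne_two_mul by metis
    qed
  qed
  have "even b \<and> odd (a div 2 + b div 2)" if oz: "odd z"
  proof -
    obtain p where a: "a = 2 * p" using z_a oz by blast
    obtain j where "z^2 = 8 * j + 1" using odd_square_eq oz by blast
    with eq have eq': "12 * p^2 + 5 * b^2 = 8 * (n - 3 * j) + 4" by (simp add: a algebra_simps)
    then have "even (12 * p^2 + 5 * b^2)" by simp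
    then have "even b" by simp
    then obtain q where b: "b = 2 * q" ..
    with eq' have "3 * p^2 + 5 * q^2 = 2 * (n - 3 * j) + 1" by (simp add: algebra_simps)
    then have "odd (3 * p^2 + 5 * q^2)" by simp
    then show ?thesis by (simp add: a b)
  qed
  with z_a show ?thesis by blast
qed

lemma reps_3_5_12_even:
  fixes m :: int
  assumes "(x, y, z) \<in> reps 3 5 12 (4 * m)" "m mod 8 = 7" "even x"
  shows "(odd z \<longleftrightarrow> 4 dvd x) \<and> (odd z \<longrightarrow> 4 dvd y \<and> odd (x div 4 + y div 4))"
proof -
  obtain n where "m = 8 * n + 7" using assms(2) by (metis div_mult_mod_eq mult.commute)
  with assms(1) have eq: "3 * x^2 + 5 * y^2 + 12 * z^2 = 32 * n + 28" by (simp add: reps_def)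
  then have "even (3 * x^2 + 5 * y^2 + 12 * z^2)" by simp
  then have "even y" using assms(3) by simp
  then obtain b where y: "y = 2 * b" ..
  obtain a where x: "x = 2 * a" using assms(3) by blast
  have "3 * a^2 + 5 * b^2 + 3 * z^2 = 8 * n + 7" using eq by (simp add: x y algebra_simps)
  then have "(odd z \<longleftrightarrow> even a) \<and> (odd z \<longrightarrow> even b \<and> odd (a div 2 + b div 2))"
    by (rule form_3_5_3_parity)
  moreover have "4 dvd x \<longleftrightarrow> even a" "x div 4 = a div 2" "4 dvd y \<longleftrightarrow> even b" "y div 4 = b div 2"
    unfolding x y by presburger+
  ultimately show ?thesis by simp
qed

section \<open>Halving by changes of sign\<close>

lemma card_odd_reps_3_5_half_16:
  fixes c M :: int
  assumes "c > 0" "4 dvd c" "(M - c) mod 32 = 16"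
  shows "card (odd_reps 3 5 c M) = 2 * card {(x, y, z) \<in> odd_reps 3 5 c M. 16 dvd x + 5 * y}"
proof (rule card_eq_twice_card_half)
  let ?g = "\<lambda>(x, y, z). (- x, y, z)"
  fix v assume "v \<in> odd_reps 3 5 c M"
  then obtain x y z where v: "v = (x, y, z)" and A: "(x, y, z) \<in> odd_reps 3 5 c M"
    by (metis prod_cases3)
  then have "odd x" "odd y" by (auto simp: odd_reps_def)
  moreover have "16 dvd x + 5 * y \<or> 16 dvd x - 5 * y"
    using dvd_16_of_form_3_5_mod_32_eq_16 odd_reps_3_5_mod_32[OF A assms(2)] assms(3) calculation
    by simp
  ultimately have "16 dvd - x + 5 * y \<longleftrightarrow> \<not> 16 dvd x + 5 * y" by presburger
  moreover have "(- x, y, z) \<in> odd_reps 3 5 c M" using A by (simp add: odd_reps_def reps_def)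
  ultimately show "?g v \<in> odd_reps 3 5 c M \<and> ?g (?g v) = v \<and>
      (?g v \<in> {(x, y, z) \<in> odd_reps 3 5 c M. 16 dvd x + 5 * y} \<longleftrightarrow>
       v \<notin> {(x, y, z) \<in> odd_reps 3 5 c M. 16 dvd x + 5 * y})"
    using A by (simp add: v)
qed (use assms(1) finite_odd_reps in auto)

lemma card_odd_reps_3_5_half_8:
  fixes c M :: int
  assumes "c > 0" "4 dvd c" "(M - c) mod 32 = 0"
  shows "card (odd_reps 3 5 c M) = 2 * card {(x, y, z) \<in> odd_reps 3 5 c M. 8 dvd y - 3 * x}"
proof (rule card_eq_twice_card_half)
  let ?g = "\<lambda>(x, y, z). (x, - y, z)"
  fix v assume "v \<in> odd_reps 3 5 c M"
  then obtain x y z where v: "v = (x, y, z)" and A: "(x, y, z) \<in> odd_reps 3 5 c M"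
    by (metis prod_cases3)
  then have "odd x" "odd y" by (auto simp: odd_reps_def)
  then have "(y - 3 * x) mod 16 = 8 \<and> \<not> 8 dvd y + 3 * x \<or> (y + 3 * x) mod 16 = 8 \<and> \<not> 8 dvd y - 3 * x"
    using mod_16_of_form_3_5_mod_32_eq_0 odd_reps_3_5_mod_32[OF A assms(2)] assms(3) by simp
  moreover have "a mod 16 = 8 \<Longrightarrow> 8 dvd a" for a :: int by presburger
  moreover have "8 dvd - y - 3 * x \<longleftrightarrow> 8 dvd y + 3 * x"
    using dvd_minus_iff[of 8 "y + 3 * x"] by simp
  ultimately have "8 dvd - y - 3 * x \<longleftrightarrow> \<not> 8 dvd y - 3 * x" by blast
  moreover have "(x, - y, z) \<in> odd_reps 3 5 c M" using A by (simp add: odd_reps_def reps_def)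
  ultimately show "?g v \<in> odd_reps 3 5 c M \<and> ?g (?g v) = v \<and>
      (?g v \<in> {(x, y, z) \<in> odd_reps 3 5 c M. 8 dvd y - 3 * x} \<longleftrightarrow>
       v \<notin> {(x, y, z) \<in> odd_reps 3 5 c M. 8 dvd y - 3 * x})"
    using A by (simp add: v)
qed (use assms(1) finite_odd_reps in auto)

lemma card_odd_reps_3_5_half_8_32:
  fixes c M :: int
  assumes "c > 0" "4 dvd c" "(M - c) mod 32 = 0"
  shows "card {(x, y, z) \<in> odd_reps 3 5 c M. 8 dvd y - 3 * x} =
    2 * card {(x, y, z) \<in> odd_reps 3 5 c M. 8 dvd y - 3 * x \<and> 32 dvd x + 5 * y + 8 * z}"
proof (rule card_eq_twice_card_half)
  let ?g = "\<lambda>(x, y, z). (x, y, - z)"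
  let ?A = "{(x, y, z) \<in> odd_reps 3 5 c M. 8 dvd y - 3 * x}"
  fix v assume "v \<in> ?A"
  then obtain x y z where v: "v = (x, y, z)" and A: "(x, y, z) \<in> odd_reps 3 5 c M"
    and d: "8 dvd y - 3 * x"
    by (metis (no_types, lifting) case_prodE mem_Collect_eq)
  have odd: "odd x" "odd y" "odd z" using A by (auto simp: odd_reps_def)
  have "(3 * x^2 + 5 * y^2) mod 32 = 0" using odd_reps_3_5_mod_32[OF A assms(2)] assms(3) by simp
  then have "(y - 3 * x) mod 16 = 8 \<and> \<not> 8 dvd y + 3 * x \<or> (y + 3 * x) mod 16 = 8 \<and> \<not> 8 dvd y - 3 * x"
    by (rule mod_16_of_form_3_5_mod_32_eq_0[OF odd(1,2)])
  with d have "(y - 3 * x) mod 16 = 8" by blast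
  moreover define s where "s = (y - 3 * x) div 16"
  ultimately have s: "y = 3 * x + 16 * s + 8"
    using div_mult_mod_eq[of "y - 3 * x" 16] by linarith
  obtain e where e: "z = 2 * e + 1" using odd(3) by (blast elim: oddE)
  have e1: "x + 5 * y + 8 * z = 16 * (5 * s + x + e + 3)"
    and e2: "x + 5 * y + 8 * - z = 16 * (5 * s + x - e + 2)"
    by (simp_all add: s e algebra_simps)
  have half: "32 dvd 16 * w \<longleftrightarrow> even w" for w :: int by presburger
  have "32 dvd x + 5 * y + 8 * - z \<longleftrightarrow> \<not> 32 dvd x + 5 * y + 8 * z"
    unfolding e1 e2 half by simp
  moreover have "(x, y, - z) \<in> odd_reps 3 5 c M" using A by (simp add: odd_reps_def reps_def)
  ultimately show "?g v \<in> ?A \<and> ?g (?g v) = v \<and>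
      (?g v \<in> {(x, y, z) \<in> odd_reps 3 5 c M. 8 dvd y - 3 * x \<and> 32 dvd x + 5 * y + 8 * z} \<longleftrightarrow>
       v \<notin> {(x, y, z) \<in> odd_reps 3 5 c M. 8 dvd y - 3 * x \<and> 32 dvd x + 5 * y + 8 * z})"
    using A d by (simp add: v)
next
  show "finite {(x, y, z) \<in> odd_reps 3 5 c M. 8 dvd y - 3 * x}"
    by (rule finite_subset[OF _ finite_odd_reps[of 3 5 c M]]) (use assms(1) in auto)
qed auto

lemma card_reps_3_5_half_4:
  fixes c m :: int
  assumes "c > 0" "c mod 8 = 4" "m mod 8 = 1"
  shows "card (reps 3 5 c m) = 2 * card {(x, y, z) \<in> reps 3 5 c m. 4 dvd x div 2 + y + z}"
proof (rule card_eq_twice_card_half)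
  let ?g = "\<lambda>(x, y, z). (x, - y, z)"
  fix v assume "v \<in> reps 3 5 c m"
  then obtain x y z where v: "v = (x, y, z)" and B: "(x, y, z) \<in> reps 3 5 c m"
    by (metis prod_cases3)
  then have "4 dvd x div 2 + - y + z \<longleftrightarrow> \<not> 4 dvd x div 2 + y + z"
    using reps_3_5_parity[OF B assms(2,3)] by presburger
  moreover have "(x, - y, z) \<in> reps 3 5 c m" using B by (simp add: reps_def)
  ultimately show "?g v \<in> reps 3 5 c m \<and> ?g (?g v) = v \<and>
      (?g v \<in> {(x, y, z) \<in> reps 3 5 c m. 4 dvd x div 2 + y + z} \<longleftrightarrow>
       v \<notin> {(x, y, z) \<in> reps 3 5 c m. 4 dvd x div 2 + y + z})"
    using B by (simp add: v)
qed (use assms(1) finite_reps in auto)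

section \<open>Linear substitutions\<close>

lemma div_eq_of_eq_mult:
  fixes a b d :: int
  assumes "a = d * b" "d \<noteq> 0"
  shows "a div d = b"
  using assms by simp

(* The maps are built from the involution (x, y) |-> ((x + 5y)/4, (3x - y)/4), which preserves
   3x^2 + 5y^2, by rescaling and, for c = 4 and 36, a similar substitution mixing in z. The maps
   up_c are written with x div 2, as x is even in every representation they are applied to. *)

definition down_20 :: "int \<times> int \<times> int \<Rightarrow> int \<times> int \<times> int" where
  "down_20 = (\<lambda>(x, y, z). ((x + 5 * y) div 8, z, (3 * x - y) div 16))"

definition up_20 :: "int \<times> int \<times> int \<Rightarrow> int \<times> int \<times> int" where
  "up_20 = (\<lambda>(x, y, z). (x div 2 + 5 * z, 3 * (x div 2) - z, y))"

lemma up_down_20: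
  fixes x y z m :: int
  assumes A: "(x, y, z) \<in> odd_reps 3 5 20 (4 * m)" and "16 dvd x + 5 * y"
  shows "down_20 (x, y, z) \<in> reps 3 5 20 m \<and> up_20 (down_20 (x, y, z)) = (x, y, z)"
proof -
  obtain p where "x + 5 * y = 16 * p" using \<open>16 dvd x + 5 * y\<close> by (elim dvdE)
  then have x: "x = 16 * p - 5 * y" by linarith
  have "(x + 5 * y) div 8 = 2 * p" "(3 * x - y) div 16 = 3 * p - y"
    by (rule div_eq_of_eq_mult; simp add: x algebra_simps)+
  then have f: "down_20 (x, y, z) = (2 * p, z, 3 * p - y)" unfolding down_20_def by simp
  have "4 * (3 * (2 * p)^2 + 5 * z^2 + 20 * (3 * p - y)^2) = 3 * x^2 + 5 * y^2 + 20 * z^2"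
    by (simp add: x power2_eq_square algebra_simps)
  also have "\<dots> = 4 * m" using A by (simp add: odd_reps_def reps_def)
  finally have "down_20 (x, y, z) \<in> reps 3 5 20 m" by (simp add: f reps_def)
  moreover have "up_20 (down_20 (x, y, z)) = (x, y, z)" unfolding f up_20_def by (simp add: x)
  ultimately show ?thesis by (rule conjI)
qed

lemma down_up_20:
  fixes x y z m :: int
  assumes "m mod 8 = 1" and B: "(x, y, z) \<in> reps 3 5 20 m"
  shows "up_20 (x, y, z) \<in> {(x, y, z) \<in> odd_reps 3 5 20 (4 * m). 16 dvd x + 5 * y} \<and>
    down_20 (up_20 (x, y, z)) = (x, y, z)"
proof -
  have "even x" "odd y" "odd (x div 2 + z)" using reps_3_5_parity[OF B _ assms(1)] by simp_all
  then obtain u where x: "x = 2 * u" and odd: "odd y" "odd (u + z)" by auto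
  have g: "up_20 (x, y, z) = (u + 5 * z, 3 * u - z, y)" by (simp add: up_20_def x)
  have "3 * (u + 5 * z)^2 + 5 * (3 * u - z)^2 + 20 * y^2 = 4 * (3 * x^2 + 5 * y^2 + 20 * z^2)"
    by (simp add: x power2_eq_square algebra_simps)
  also have "\<dots> = 4 * m" using B by (simp add: reps_def)
  finally have "up_20 (x, y, z) \<in> {(x, y, z) \<in> odd_reps 3 5 20 (4 * m). 16 dvd x + 5 * y}"
    using odd by (simp add: g odd_reps_def reps_def)
  moreover have "u + 5 * z + 5 * (3 * u - z) = 8 * (2 * u)" "3 * (u + 5 * z) - (3 * u - z) = 16 * z"
    by simp_all
  then have "down_20 (up_20 (x, y, z)) = (x, y, z)" unfolding g down_20_def by (simp add: x)
  ultimately show ?thesis by (rule conjI)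
qed

lemma bij_betw_down_20:
  fixes m :: int
  assumes "m mod 8 = 1"
  shows "bij_betw down_20 {(x, y, z) \<in> odd_reps 3 5 20 (4 * m). 16 dvd x + 5 * y} (reps 3 5 20 m)"
proof (rule bij_betw_by_inverse[where g = up_20])
  fix v assume "v \<in> {(x, y, z) \<in> odd_reps 3 5 20 (4 * m). 16 dvd x + 5 * y}"
  then obtain x y z where v: "v = (x, y, z)" and mem: "(x, y, z) \<in> odd_reps 3 5 20 (4 * m)" "16 dvd x + 5 * y"
    by (metis (no_types, lifting) case_prodE mem_Collect_eq)
  from mem show "down_20 v \<in> reps 3 5 20 m \<and> up_20 (down_20 v) = v"
    unfolding v by (rule up_down_20)
next
  fix w assume "w \<in> reps 3 5 20 m"
  then obtain x y z where w: "w = (x, y, z)" and mem: "(x, y, z) \<in> reps 3 5 20 m"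
    by (metis prod_cases3)
  from assms mem show "up_20 w \<in> {(x, y, z) \<in> odd_reps 3 5 20 (4 * m). 16 dvd x + 5 * y} \<and>
      down_20 (up_20 w) = w"
    unfolding w by (rule down_up_20)
qed

definition down_4 :: "int \<times> int \<times> int \<Rightarrow> int \<times> int \<times> int" where
  "down_4 = (\<lambda>(x, y, z). ((x + 5 * y + 8 * z) div 16, (y - 3 * x) div 8, (3 * x + 15 * y - 8 * z) div 32))"

definition up_4 :: "int \<times> int \<times> int \<Rightarrow> int \<times> int \<times> int" where
  "up_4 = (\<lambda>(x, y, z). ((x div 2 + z - 5 * y) div 2, (3 * (x div 2) + 3 * z + y) div 2, 3 * (x div 2) - z))"

lemma up_down_4:
  fixes x y z m :: int
  assumes A: "(x, y, z) \<in> odd_reps 3 5 4 (4 * m)" and "8 dvd y - 3 * x" "32 dvd x + 5 * y + 8 * z"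
  shows "down_4 (x, y, z) \<in> {(x, y, z) \<in> reps 3 5 4 m. 4 dvd x div 2 + y + z} \<and>
    up_4 (down_4 (x, y, z)) = (x, y, z)"
proof -
  obtain q w where "y - 3 * x = 8 * q" "x + 5 * y + 8 * z = 32 * w"
    using \<open>8 dvd y - 3 * x\<close> \<open>32 dvd x + 5 * y + 8 * z\<close> by (meson dvdE)
  then have y: "y = 3 * x + 8 * q" and z: "z = 4 * w - 2 * x - 5 * q" by linarith+
  have "(x + 5 * y + 8 * z) div 16 = 2 * w" "(y - 3 * x) div 8 = q"
    "(3 * x + 15 * y - 8 * z) div 32 = 3 * w - z"
    by (rule div_eq_of_eq_mult; simp add: y z algebra_simps)+
  then have f: "down_4 (x, y, z) = (2 * w, q, 3 * w - z)" unfolding down_4_def by simp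
  have "4 * (3 * (2 * w)^2 + 5 * q^2 + 4 * (3 * w - z)^2) = 3 * x^2 + 5 * y^2 + 4 * z^2"
    by (simp add: y z power2_eq_square algebra_simps)
  also have "\<dots> = 4 * m" using A by (simp add: odd_reps_def reps_def)
  finally have rep: "(2 * w, q, 3 * w - z) \<in> reps 3 5 4 m" by (simp add: reps_def)
  have "odd x" "odd z" using A by (auto simp: odd_reps_def)
  then have "even (x + 3 * q)" by (simp add: z)
  then obtain r where "x + 3 * q = 2 * r" ..
  then have "2 * w div 2 + q + (3 * w - z) = 4 * r" by (simp add: z)
  then have "down_4 (x, y, z) \<in> {(x, y, z) \<in> reps 3 5 4 m. 4 dvd x div 2 + y + z}"
    using rep by (simp add: f)
  moreover have "(2 * w div 2 + (3 * w - z) - 5 * q) div 2 = x"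
    "(3 * (2 * w div 2) + 3 * (3 * w - z) + q) div 2 = y"
    by (rule div_eq_of_eq_mult; simp add: y z)+
  then have "up_4 (down_4 (x, y, z)) = (x, y, z)" unfolding f up_4_def by simp
  ultimately show ?thesis by (rule conjI)
qed

lemma down_up_4:
  fixes x y z m :: int
  assumes "m mod 8 = 1" and B: "(x, y, z) \<in> reps 3 5 4 m" and "4 dvd x div 2 + y + z"
  shows "up_4 (x, y, z) \<in> {(x, y, z) \<in> odd_reps 3 5 4 (4 * m). 8 dvd y - 3 * x \<and> 32 dvd x + 5 * y + 8 * z} \<and>
    down_4 (up_4 (x, y, z)) = (x, y, z)"
proof -
  obtain k where k: "x div 2 + y + z = 4 * k" using \<open>4 dvd x div 2 + y + z\<close> by (elim dvdE)
  have "even x" "odd y" using reps_3_5_parity[OF B _ assms(1)] by simp_all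
  then obtain u where x: "x = 2 * u" by blast
  with k have z: "z = 4 * k - u - y" by simp
  have "(x div 2 + z - 5 * y) div 2 = 2 * k - 3 * y" "(3 * (x div 2) + 3 * z + y) div 2 = 6 * k - y"
    by (rule div_eq_of_eq_mult; simp add: x z algebra_simps)+
  moreover have "3 * (x div 2) - z = 4 * u - 4 * k + y" by (simp add: x z)
  ultimately have g: "up_4 (x, y, z) = (2 * k - 3 * y, 6 * k - y, 4 * u - 4 * k + y)"
    unfolding up_4_def by simp
  have "3 * (2 * k - 3 * y)^2 + 5 * (6 * k - y)^2 + 4 * (4 * u - 4 * k + y)^2
      = 4 * (3 * x^2 + 5 * y^2 + 4 * z^2)"
    by (simp add: x z power2_eq_square algebra_simps)
  also have "\<dots> = 4 * m" using B by (simp add: reps_def)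
  finally have rep: "(2 * k - 3 * y, 6 * k - y, 4 * u - 4 * k + y) \<in> odd_reps 3 5 4 (4 * m)"
    using \<open>odd y\<close> by (simp add: odd_reps_def reps_def)
  have "6 * k - y - 3 * (2 * k - 3 * y) = 8 * y"
    "2 * k - 3 * y + 5 * (6 * k - y) + 8 * (4 * u - 4 * k + y) = 32 * u"
    by (simp_all add: algebra_simps)
  then have "8 dvd 6 * k - y - 3 * (2 * k - 3 * y)"
    "32 dvd 2 * k - 3 * y + 5 * (6 * k - y) + 8 * (4 * u - 4 * k + y)"
    by simp_all
  with rep have "up_4 (x, y, z) \<in>
      {(x, y, z) \<in> odd_reps 3 5 4 (4 * m). 8 dvd y - 3 * x \<and> 32 dvd x + 5 * y + 8 * z}"
    unfolding g by (simp only: mem_Collect_eq case_prod_conv)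
  moreover have "(2 * k - 3 * y + 5 * (6 * k - y) + 8 * (4 * u - 4 * k + y)) div 16 = x"
    "(6 * k - y - 3 * (2 * k - 3 * y)) div 8 = y"
    "(3 * (2 * k - 3 * y) + 15 * (6 * k - y) - 8 * (4 * u - 4 * k + y)) div 32 = z"
    by (rule div_eq_of_eq_mult; simp add: x z algebra_simps)+
  then have "down_4 (up_4 (x, y, z)) = (x, y, z)" unfolding g down_4_def by (simp only: case_prod_conv)
  ultimately show ?thesis by (rule conjI)
qed

lemma bij_betw_down_4:
  fixes m :: int
  assumes "m mod 8 = 1"
  shows "bij_betw down_4
    {(x, y, z) \<in> odd_reps 3 5 4 (4 * m). 8 dvd y - 3 * x \<and> 32 dvd x + 5 * y + 8 * z}
    {(x, y, z) \<in> reps 3 5 4 m. 4 dvd x div 2 + y + z}"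
  (is "bij_betw _ ?A ?B")
proof (rule bij_betw_by_inverse[where g = up_4])
  fix v assume "v \<in> ?A"
  then obtain x y z where v: "v = (x, y, z)" and mem: "(x, y, z) \<in> odd_reps 3 5 4 (4 * m)"
    "8 dvd y - 3 * x" "32 dvd x + 5 * y + 8 * z"
    by (metis (no_types, lifting) case_prodE mem_Collect_eq)
  from mem show "down_4 v \<in> ?B \<and> up_4 (down_4 v) = v" unfolding v by (rule up_down_4)
next
  fix w assume "w \<in> ?B"
  then obtain x y z where w: "w = (x, y, z)" and mem: "(x, y, z) \<in> reps 3 5 4 m" "4 dvd x div 2 + y + z"
    by (metis (no_types, lifting) case_prodE mem_Collect_eq)
  from assms mem show "up_4 w \<in> ?A \<and> down_4 (up_4 w) = w" unfolding w by (rule down_up_4)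
qed

definition down_36 :: "int \<times> int \<times> int \<Rightarrow> int \<times> int \<times> int" where
  "down_36 = (\<lambda>(x, y, z). ((- x - 5 * y + 24 * z) div 16, (3 * x - y) div 8, (x + 5 * y + 8 * z) div 32))"

definition up_36 :: "int \<times> int \<times> int \<Rightarrow> int \<times> int \<times> int" where
  "up_36 = (\<lambda>(x, y, z). ((3 * z - x div 2 + 5 * y) div 2, (9 * z - 3 * (x div 2) - y) div 2, x div 2 + z))"

lemma up_down_36:
  fixes x y z m :: int
  assumes A: "(x, y, z) \<in> odd_reps 3 5 36 (4 * m)" and "8 dvd y - 3 * x" "32 dvd x + 5 * y + 8 * z"
  shows "down_36 (x, y, z) \<in> {(x, y, z) \<in> reps 3 5 36 m. 4 dvd x div 2 + y + z} \<and>
    up_36 (down_36 (x, y, z)) = (x, y, z)"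
proof -
  obtain q w where "y - 3 * x = 8 * q" "x + 5 * y + 8 * z = 32 * w"
    using \<open>8 dvd y - 3 * x\<close> \<open>32 dvd x + 5 * y + 8 * z\<close> by (meson dvdE)
  then have y: "y = 3 * x + 8 * q" and z: "z = 4 * w - 2 * x - 5 * q" by linarith+
  have "(- x - 5 * y + 24 * z) div 16 = 2 * (z - w)" "(3 * x - y) div 8 = - q"
    "(x + 5 * y + 8 * z) div 32 = w"
    by (rule div_eq_of_eq_mult; simp add: y z algebra_simps)+
  then have f: "down_36 (x, y, z) = (2 * (z - w), - q, w)" unfolding down_36_def by simp
  have "4 * (3 * (2 * (z - w))^2 + 5 * (- q)^2 + 36 * w^2) = 3 * x^2 + 5 * y^2 + 36 * z^2"
    by (simp add: y z power2_eq_square algebra_simps)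
  also have "\<dots> = 4 * m" using A by (simp add: odd_reps_def reps_def)
  finally have rep: "(2 * (z - w), - q, w) \<in> reps 3 5 36 m" by (simp add: reps_def)
  have "odd x" "odd z" using A by (auto simp: odd_reps_def)
  then have "even (x + 3 * q)" by (simp add: z)
  then obtain r where "x + 3 * q = 2 * r" ..
  then have "2 * (z - w) div 2 + - q + w = 4 * (w - r)" by (simp add: z)
  then have "down_36 (x, y, z) \<in> {(x, y, z) \<in> reps 3 5 36 m. 4 dvd x div 2 + y + z}"
    using rep by (simp add: f)
  moreover have "(3 * w - 2 * (z - w) div 2 + 5 * - q) div 2 = x"
    "(9 * w - 3 * (2 * (z - w) div 2) - - q) div 2 = y"
    by (rule div_eq_of_eq_mult; simp add: y z)+
  then have "up_36 (down_36 (x, y, z)) = (x, y, z)" unfolding f up_36_def by simp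
  ultimately show ?thesis by (rule conjI)
qed

lemma down_up_36:
  fixes x y z m :: int
  assumes "m mod 8 = 1" and B: "(x, y, z) \<in> reps 3 5 36 m" and "4 dvd x div 2 + y + z"
  shows "up_36 (x, y, z) \<in> {(x, y, z) \<in> odd_reps 3 5 36 (4 * m). 8 dvd y - 3 * x \<and> 32 dvd x + 5 * y + 8 * z} \<and>
    down_36 (up_36 (x, y, z)) = (x, y, z)"
proof -
  obtain k where k: "x div 2 + y + z = 4 * k" using \<open>4 dvd x div 2 + y + z\<close> by (elim dvdE)
  have "even x" "odd y" using reps_3_5_parity[OF B _ assms(1)] by simp_all
  then obtain u where x: "x = 2 * u" by blast
  with k have z: "z = 4 * k - u - y" by simp
  have "(3 * z - x div 2 + 5 * y) div 2 = 6 * k - 2 * u + y"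
    "(9 * z - 3 * (x div 2) - y) div 2 = 18 * k - 6 * u - 5 * y"
    by (rule div_eq_of_eq_mult; simp add: x z algebra_simps)+
  moreover have "x div 2 + z = 4 * k - y" by (simp add: x z)
  ultimately have g: "up_36 (x, y, z) = (6 * k - 2 * u + y, 18 * k - 6 * u - 5 * y, 4 * k - y)"
    unfolding up_36_def by simp
  have "3 * (6 * k - 2 * u + y)^2 + 5 * (18 * k - 6 * u - 5 * y)^2 + 36 * (4 * k - y)^2
      = 4 * (3 * x^2 + 5 * y^2 + 36 * z^2)"
    by (simp add: x z power2_eq_square algebra_simps)
  also have "\<dots> = 4 * m" using B by (simp add: reps_def)
  finally have rep: "(6 * k - 2 * u + y, 18 * k - 6 * u - 5 * y, 4 * k - y) \<in> odd_reps 3 5 36 (4 * m)"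
    using \<open>odd y\<close> by (simp add: odd_reps_def reps_def)
  have "18 * k - 6 * u - 5 * y - 3 * (6 * k - 2 * u + y) = 8 * (- y)"
    "6 * k - 2 * u + y + 5 * (18 * k - 6 * u - 5 * y) + 8 * (4 * k - y) = 32 * z"
    by (simp_all add: z algebra_simps)
  then have "8 dvd 18 * k - 6 * u - 5 * y - 3 * (6 * k - 2 * u + y)"
    "32 dvd 6 * k - 2 * u + y + 5 * (18 * k - 6 * u - 5 * y) + 8 * (4 * k - y)"
    by simp_all
  with rep have "up_36 (x, y, z) \<in>
      {(x, y, z) \<in> odd_reps 3 5 36 (4 * m). 8 dvd y - 3 * x \<and> 32 dvd x + 5 * y + 8 * z}"
    unfolding g by (simp only: mem_Collect_eq case_prod_conv)
  moreover have "(- (6 * k - 2 * u + y) - 5 * (18 * k - 6 * u - 5 * y) + 24 * (4 * k - y)) div 16 = x"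
    "(3 * (6 * k - 2 * u + y) - (18 * k - 6 * u - 5 * y)) div 8 = y"
    "(6 * k - 2 * u + y + 5 * (18 * k - 6 * u - 5 * y) + 8 * (4 * k - y)) div 32 = z"
    by (rule div_eq_of_eq_mult; simp add: x z algebra_simps)+
  then have "down_36 (up_36 (x, y, z)) = (x, y, z)" unfolding g down_36_def by (simp only: case_prod_conv)
  ultimately show ?thesis by (rule conjI)
qed

lemma bij_betw_down_36:
  fixes m :: int
  assumes "m mod 8 = 1"
  shows "bij_betw down_36
    {(x, y, z) \<in> odd_reps 3 5 36 (4 * m). 8 dvd y - 3 * x \<and> 32 dvd x + 5 * y + 8 * z}
    {(x, y, z) \<in> reps 3 5 36 m. 4 dvd x div 2 + y + z}"
  (is "bij_betw _ ?A ?B")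
proof (rule bij_betw_by_inverse[where g = up_36])
  fix v assume "v \<in> ?A"
  then obtain x y z where v: "v = (x, y, z)" and mem: "(x, y, z) \<in> odd_reps 3 5 36 (4 * m)"
    "8 dvd y - 3 * x" "32 dvd x + 5 * y + 8 * z"
    by (metis (no_types, lifting) case_prodE mem_Collect_eq)
  from mem show "down_36 v \<in> ?B \<and> up_36 (down_36 v) = v" unfolding v by (rule up_down_36)
next
  fix w assume "w \<in> ?B"
  then obtain x y z where w: "w = (x, y, z)" and mem: "(x, y, z) \<in> reps 3 5 36 m" "4 dvd x div 2 + y + z"
    by (metis (no_types, lifting) case_prodE mem_Collect_eq)
  from assms mem show "up_36 w \<in> ?A \<and> down_36 (up_36 w) = w" unfolding w by (rule down_up_36)
qed

definition involution_12 :: "int \<times> int \<times> int \<Rightarrow> int \<times> int \<times> int" where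
  "involution_12 = (\<lambda>(x, y, z). ((x + 5 * y) div 4, (3 * x - y) div 4, z))"

lemma involution_12_odd:
  fixes x y z m :: int
  assumes A: "(x, y, z) \<in> odd_reps 3 5 12 (4 * m)" and "16 dvd x + 5 * y"
  shows "involution_12 (x, y, z) \<in> {(x, y, z) \<in> reps 3 5 12 (4 * m). even x \<and> odd z} \<and>
    involution_12 (involution_12 (x, y, z)) = (x, y, z)"
proof -
  obtain p where "x + 5 * y = 16 * p" using \<open>16 dvd x + 5 * y\<close> by (elim dvdE)
  then have x: "x = 16 * p - 5 * y" by linarith
  have "(x + 5 * y) div 4 = 4 * p" "(3 * x - y) div 4 = 12 * p - 4 * y"
    by (rule div_eq_of_eq_mult; simp add: x algebra_simps)+
  then have f: "involution_12 (x, y, z) = (4 * p, 12 * p - 4 * y, z)"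
    unfolding involution_12_def by simp
  have "3 * (4 * p)^2 + 5 * (12 * p - 4 * y)^2 + 12 * z^2 = 3 * x^2 + 5 * y^2 + 12 * z^2"
    by (simp add: x power2_eq_square algebra_simps)
  also have "\<dots> = 4 * m" using A by (simp add: odd_reps_def reps_def)
  finally have "involution_12 (x, y, z) \<in> {(x, y, z) \<in> reps 3 5 12 (4 * m). even x \<and> odd z}"
    using A by (simp add: f odd_reps_def reps_def)
  moreover have "(4 * p + 5 * (12 * p - 4 * y)) div 4 = x" "(3 * (4 * p) - (12 * p - 4 * y)) div 4 = y"
    by (rule div_eq_of_eq_mult; simp add: x algebra_simps)+
  then have "involution_12 (involution_12 (x, y, z)) = (x, y, z)"
    unfolding f by (simp add: involution_12_def)
  ultimately show ?thesis by (rule conjI)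
qed

lemma involution_12_even:
  fixes x y z m :: int
  assumes "m mod 8 = 7" and B: "(x, y, z) \<in> reps 3 5 12 (4 * m)" and "even x" "odd z"
  shows "involution_12 (x, y, z) \<in> {(x, y, z) \<in> odd_reps 3 5 12 (4 * m). 16 dvd x + 5 * y} \<and>
    involution_12 (involution_12 (x, y, z)) = (x, y, z)"
proof -
  have "4 dvd x" "4 dvd y" and odd_xy: "odd (x div 4 + y div 4)"
    using reps_3_5_12_even[OF B assms(1) \<open>even x\<close>] \<open>odd z\<close> by simp_all
  then obtain p q where x: "x = 4 * p" and y: "y = 4 * q" by (meson dvdE)
  from odd_xy have "odd (p + q)" by (simp add: x y)
  have "(x + 5 * y) div 4 = p + 5 * q" "(3 * x - y) div 4 = 3 * p - q"
    by (rule div_eq_of_eq_mult; simp add: x y algebra_simps)+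
  then have f: "involution_12 (x, y, z) = (p + 5 * q, 3 * p - q, z)"
    unfolding involution_12_def by simp
  have "3 * (p + 5 * q)^2 + 5 * (3 * p - q)^2 + 12 * z^2 = 3 * x^2 + 5 * y^2 + 12 * z^2"
    by (simp add: x y power2_eq_square algebra_simps)
  also have "\<dots> = 4 * m" using B by (simp add: reps_def)
  finally have "(p + 5 * q, 3 * p - q, z) \<in> odd_reps 3 5 12 (4 * m)"
    using \<open>odd (p + q)\<close> \<open>odd z\<close> by (simp add: odd_reps_def reps_def)
  moreover have "p + 5 * q + 5 * (3 * p - q) = 16 * p" by simp
  ultimately have "involution_12 (x, y, z) \<in> {(x, y, z) \<in> odd_reps 3 5 12 (4 * m). 16 dvd x + 5 * y}"
    by (simp add: f)
  moreover have "(p + 5 * q + 5 * (3 * p - q)) div 4 = x" "(3 * (p + 5 * q) - (3 * p - q)) div 4 = y"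
    by (rule div_eq_of_eq_mult; simp add: x y algebra_simps)+
  then have "involution_12 (involution_12 (x, y, z)) = (x, y, z)"
    unfolding f by (simp add: involution_12_def)
  ultimately show ?thesis by (rule conjI)
qed

lemma bij_betw_involution_12:
  fixes m :: int
  assumes "m mod 8 = 7"
  shows "bij_betw involution_12 {(x, y, z) \<in> odd_reps 3 5 12 (4 * m). 16 dvd x + 5 * y}
    {(x, y, z) \<in> reps 3 5 12 (4 * m). even x \<and> odd z}"
  (is "bij_betw _ ?A ?B")
proof (rule bij_betw_by_inverse[where g = involution_12])
  fix v assume "v \<in> ?A"
  then obtain x y z where v: "v = (x, y, z)" and mem: "(x, y, z) \<in> odd_reps 3 5 12 (4 * m)" "16 dvd x + 5 * y"
    by (metis (no_types, lifting) case_prodE mem_Collect_eq)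
  from mem show "involution_12 v \<in> ?B \<and> involution_12 (involution_12 v) = v"
    unfolding v by (rule involution_12_odd)
next
  fix w assume "w \<in> ?B"
  then obtain x y z where w: "w = (x, y, z)" and mem: "(x, y, z) \<in> reps 3 5 12 (4 * m)" "even x" "odd z"
    by (metis (no_types, lifting) case_prodE mem_Collect_eq)
  from assms mem show "involution_12 w \<in> ?A \<and> involution_12 (involution_12 w) = w"
    unfolding w by (rule involution_12_even)
qed

lemma card_odd_reps_3_5_20:
  fixes m :: int
  assumes "m mod 8 = 1"
  shows "card (odd_reps 3 5 20 (4 * m)) = 2 * card (reps 3 5 20 m)"
proof -
  have "(4 * m - 20) mod 32 = 16" using assms by presburger
  then have "card (odd_reps 3 5 20 (4 * m)) =
      2 * card {(x, y, z) \<in> odd_reps 3 5 20 (4 * m). 16 dvd x + 5 * y}"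
    by (intro card_odd_reps_3_5_half_16) simp_all
  also have "card {(x, y, z) \<in> odd_reps 3 5 20 (4 * m). 16 dvd x + 5 * y} = card (reps 3 5 20 m)"
    using bij_betw_down_20[OF assms] by (rule bij_betw_same_card)
  finally show ?thesis .
qed

lemma card_odd_reps_3_5_4:
  fixes m :: int
  assumes "m mod 8 = 1"
  shows "card (odd_reps 3 5 4 (4 * m)) = 2 * card (reps 3 5 4 m)"
proof -
  have M: "(4 * m - 4) mod 32 = 0" using assms by presburger
  have "card (odd_reps 3 5 4 (4 * m)) =
      4 * card {(x, y, z) \<in> odd_reps 3 5 4 (4 * m). 8 dvd y - 3 * x \<and> 32 dvd x + 5 * y + 8 * z}"
    using card_odd_reps_3_5_half_8[of 4 "4 * m"] card_odd_reps_3_5_half_8_32[of 4 "4 * m"] M by simp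
  also have "card {(x, y, z) \<in> odd_reps 3 5 4 (4 * m). 8 dvd y - 3 * x \<and> 32 dvd x + 5 * y + 8 * z} =
      card {(x, y, z) \<in> reps 3 5 4 m. 4 dvd x div 2 + y + z}"
    using bij_betw_down_4[OF assms] by (rule bij_betw_same_card)
  also have "4 * \<dots> = 2 * card (reps 3 5 4 m)"
    using card_reps_3_5_half_4[of 4 m] assms by simp
  finally show ?thesis .
qed

lemma card_odd_reps_3_5_36:
  fixes m :: int
  assumes "m mod 8 = 1"
  shows "card (odd_reps 3 5 36 (4 * m)) = 2 * card (reps 3 5 36 m)"
proof -
  have M: "(4 * m - 36) mod 32 = 0" using assms by presburger
  have "card (odd_reps 3 5 36 (4 * m)) =
      4 * card {(x, y, z) \<in> odd_reps 3 5 36 (4 * m). 8 dvd y - 3 * x \<and> 32 dvd x + 5 * y + 8 * z}"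
    using card_odd_reps_3_5_half_8[of 36 "4 * m"] card_odd_reps_3_5_half_8_32[of 36 "4 * m"] M by simp
  also have "card {(x, y, z) \<in> odd_reps 3 5 36 (4 * m). 8 dvd y - 3 * x \<and> 32 dvd x + 5 * y + 8 * z} =
      card {(x, y, z) \<in> reps 3 5 36 m. 4 dvd x div 2 + y + z}"
    using bij_betw_down_36[OF assms] by (rule bij_betw_same_card)
  also have "4 * \<dots> = 2 * card (reps 3 5 36 m)"
    using card_reps_3_5_half_4[of 36 m] assms by simp
  finally show ?thesis .
qed

lemma card_reps_3_5_12:
  fixes m :: int
  assumes "m mod 8 = 7"
  shows "card (reps 3 5 12 (4 * m)) = 2 * card (odd_reps 3 5 12 (4 * m))"
proof -
  let ?R = "reps 3 5 12 (4 * m)"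
  let ?E = "{(x, y, z) \<in> ?R. even x}"
  let ?E1 = "{(x, y, z) \<in> ?R. even x \<and> odd z}"
  have fin: "finite ?R" by (rule finite_reps) simp_all
  have odd_part: "odd_reps 3 5 12 (4 * m) = ?R - ?E"
  proof (rule set_eqI)
    fix v :: "int \<times> int \<times> int"
    obtain x y z where v: "v = (x, y, z)" by (metis prod_cases3)
    show "v \<in> odd_reps 3 5 12 (4 * m) \<longleftrightarrow> v \<in> ?R - ?E"
      using reps_3_5_12_odd[of x y z m] assms by (auto simp: v odd_reps_def)
  qed
  have "?E \<subseteq> ?R" by auto
  with fin have finE: "finite ?E" by (rule finite_subset[rotated])
  from \<open>?E \<subseteq> ?R\<close> have "card ?E \<le> card ?R" "card (?R - ?E) = card ?R - card ?E"
    using fin by (simp_all add: card_mono card_Diff_subset finite_subset)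
  with odd_part have "card ?R = card (odd_reps 3 5 12 (4 * m)) + card ?E" by simp
  moreover have "card ?E = 2 * card ?E1"
  proof (rule card_eq_twice_card_half)
    let ?s = "\<lambda>(x, y, z). (2 * z, y, x div 2)"
    fix v assume "v \<in> ?E"
    then obtain x y z where v: "v = (x, y, z)" and R: "(x, y, z) \<in> ?R" and "even x"
      by (metis (no_types, lifting) case_prodE mem_Collect_eq)
    then have R': "(2 * z, y, x div 2) \<in> ?R" by (auto simp: reps_def power_mult_distrib)
    have "odd (x div 2) \<longleftrightarrow> \<not> odd z"
      using reps_3_5_12_even[OF R assms \<open>even x\<close>] \<open>even x\<close> by (auto elim!: evenE)
    with R R' \<open>even x\<close> show "?s v \<in> ?E \<and> ?s (?s v) = v \<and> (?s v \<in> ?E1 \<longleftrightarrow> v \<notin> ?E1)"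
      by (simp add: v)
  qed (use finE in auto)
  moreover have "card (odd_reps 3 5 12 (4 * m)) =
      2 * card {(x, y, z) \<in> odd_reps 3 5 12 (4 * m). 16 dvd x + 5 * y}"
    using assms by (intro card_odd_reps_3_5_half_16) presburger+
  moreover have "card {(x, y, z) \<in> odd_reps 3 5 12 (4 * m). 16 dvd x + 5 * y} = card ?E1"
    using bij_betw_involution_12[OF assms] by (rule bij_betw_same_card)
  ultimately show ?thesis by simp
qed

lemma t_3_4_5:
  assumes "n mod 4 = 3"
  shows "t 3 4 5 n = 2 * N 3 4 5 (2 * n + 3)"
proof -
  have "t 3 4 5 n = card (odd_reps 3 4 5 (4 * (2 * int n + 3)))"
    by (simp add: t_eq_card_odd_reps algebra_simps)
  also have "\<dots> = card (odd_reps 3 5 4 (4 * (2 * int n + 3)))"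
    by (rule bij_betw_same_card[OF bij_betw_swap_odd_reps])
  also have "\<dots> = 2 * card (reps 3 5 4 (2 * int n + 3))"
    using assms by (intro card_odd_reps_3_5_4) presburger
  also have "card (reps 3 5 4 (2 * int n + 3)) = card (reps 3 4 5 (2 * int n + 3))"
    by (rule bij_betw_same_card[OF bij_betw_swap_reps])
  also have "\<dots> = N 3 4 5 (2 * n + 3)" by (simp add: N_eq_card_reps)
  finally show ?thesis .
qed

lemma t_3_5_20:
  assumes "n mod 4 = 1"
  shows "t 3 5 20 n = 2 * N 3 5 20 (2 * n + 7)"
proof -
  have "t 3 5 20 n = card (odd_reps 3 5 20 (4 * (2 * int n + 7)))"
    by (simp add: t_eq_card_odd_reps algebra_simps)
  also have "\<dots> = 2 * card (reps 3 5 20 (2 * int n + 7))"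
    using assms by (intro card_odd_reps_3_5_20) presburger
  also have "\<dots> = 2 * N 3 5 20 (2 * n + 7)" by (simp add: N_eq_card_reps)
  finally show ?thesis .
qed

lemma t_3_5_36:
  assumes "n mod 4 = 3"
  shows "t 3 5 36 n = 2 * N 3 5 36 (2 * n + 11)"
proof -
  have "t 3 5 36 n = card (odd_reps 3 5 36 (4 * (2 * int n + 11)))"
    by (simp add: t_eq_card_odd_reps algebra_simps)
  also have "\<dots> = 2 * card (reps 3 5 36 (2 * int n + 11))"
    using assms by (intro card_odd_reps_3_5_36) presburger
  also have "\<dots> = 2 * N 3 5 36 (2 * n + 11)" by (simp add: N_eq_card_reps)
  finally show ?thesis .
qed

lemma N_3_5_12:
  assumes "n mod 4 = 1"
  shows "N 3 5 12 (8 * n + 20) = 2 * t 3 5 12 n"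
proof -
  have "N 3 5 12 (8 * n + 20) = card (reps 3 5 12 (4 * (2 * int n + 5)))"
    by (simp add: N_eq_card_reps algebra_simps)
  also have "\<dots> = 2 * card (odd_reps 3 5 12 (4 * (2 * int n + 5)))"
    using assms by (intro card_reps_3_5_12) presburger
  also have "\<dots> = 2 * t 3 5 12 n" by (simp add: t_eq_card_odd_reps algebra_simps)
  finally show ?thesis .
qed

theorem theorem6p1:
  fixes n :: nat
  assumes "n > 0"
  shows "(n mod 4 = 3 \<longrightarrow> t 3 4 5 n = 2 * N 3 4 5 (2 * n + 3)) \<and>
    (n mod 4 = 1 \<longrightarrow> t 3 5 20 n = 2 * N 3 5 20 (2 * n + 7)) \<and>
    (n mod 4 = 3 \<longrightarrow> t 3 5 36 n = 2 * N 3 5 36 (2 * n + 11)) \<and>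
    (n mod 4 = 1 \<longrightarrow> real (t 3 5 12 n) = real (N 3 5 12 (8 * n + 20)) / 2)"
proof -
  show ?thesis using t_3_4_5 t_3_5_20 t_3_5_36 N_3_5_12 by simp
qed

end
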